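(* Let $(\Omega,\mathcal{F},\mathbb{P})$ be a probability space. The set $\mathbb{L}^0_+$ is locally convex for the $\mathbb{L}^0$-topology (every element has a neighbourhood base, for the relative $\mathbb{L}^0$-topology on $\mathbb{L}^0_+$, consisting of convex sets) if and only if the probability space is purely atomic. In this case, there exists a probability $\mathbb{Q}$ equivalent to $\mathbb{P}$ such that the $\mathbb{L}^0$-topology on $\mathbb{L}^0_+$ coincides with the $\mathbb{L}^1(\mathbb{Q})$-topology on $\mathbb{L}^0_+$ if and only if the probability space has only finitely many atoms (and then any $\mathbb{Q}$ equivalent to $\mathbb{P}$ works).
   Context: $\mathbb{L}^0$ is the space of (equivalence classes modulo $\mathbb{P}$-null sets of) real-valued random variables with the topology of convergence in probability, metrized by $(X,Y)\mapsto\mathbb{E}_{\mathbb{P}}[1\wedge|X-Y|]$; $\mathbb{L}^0_+$ are its nonnegative elements. *)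

theory Defs
  imports "HOL-Probability.Probability"
begin

text \<open>Random variables are represented by real-valued functions on the sample space;
  all notions below are invariant under modification on null sets, so working with
  representatives is equivalent to working with equivalence classes.\<close>

definition L0 :: "'a measure \<Rightarrow> ('a \<Rightarrow> real) set" where
  "L0 M = borel_measurable M"

definition L0_plus :: "'a measure \<Rightarrow> ('a \<Rightarrow> real) set" where
  "L0_plus M = {X \<in> borel_measurable M. AE \<omega> in M. 0 \<le> X \<omega>}"

definition dist_L0 :: "'a measure \<Rightarrow> ('a \<Rightarrow> real) \<Rightarrow> ('a \<Rightarrow> real) \<Rightarrow> ennreal" where
  "dist_L0 M X Y = (\<integral>\<^sup>+ \<omega>. ennreal (min 1 \<bar>X \<omega> - Y \<omega>\<bar>) \<partial>M)"

definition dist_L1 :: "'a measure \<Rightarrow> ('a \<Rightarrow> real) \<Rightarrow> ('a \<Rightarrow> real) \<Rightarrow> ennreal" where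
  "dist_L1 Q X Y = (\<integral>\<^sup>+ \<omega>. ennreal \<bar>X \<omega> - Y \<omega>\<bar> \<partial>Q)"

definition open_rel :: "('f \<Rightarrow> 'f \<Rightarrow> ennreal) \<Rightarrow> 'f set \<Rightarrow> 'f set \<Rightarrow> bool" where
  "open_rel d S U \<longleftrightarrow> U \<subseteq> S \<and>
     (\<forall>X\<in>U. \<exists>e::real. e > 0 \<and> {Y \<in> S. d X Y < ennreal e} \<subseteq> U)"

definition nbhd_rel :: "('f \<Rightarrow> 'f \<Rightarrow> ennreal) \<Rightarrow> 'f set \<Rightarrow> 'f \<Rightarrow> 'f set \<Rightarrow> bool" where
  "nbhd_rel d S X N \<longleftrightarrow> N \<subseteq> S \<and> (\<exists>V. open_rel d S V \<and> X \<in> V \<and> V \<subseteq> N)"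

definition convex_fun_set :: "('a \<Rightarrow> real) set \<Rightarrow> bool" where
  "convex_fun_set C \<longleftrightarrow>
     (\<forall>X\<in>C. \<forall>Y\<in>C. \<forall>t::real. 0 \<le> t \<and> t \<le> 1 \<longrightarrow> (\<lambda>\<omega>. t * X \<omega> + (1 - t) * Y \<omega>) \<in> C)"

definition L0_plus_locally_convex :: "'a measure \<Rightarrow> bool" where
  "L0_plus_locally_convex M \<longleftrightarrow>
     (\<forall>X\<in>L0_plus M. \<forall>N. nbhd_rel (dist_L0 M) (L0_plus M) X N \<longrightarrow>
        (\<exists>C. convex_fun_set C \<and> nbhd_rel (dist_L0 M) (L0_plus M) X C \<and> C \<subseteq> N))"

definition is_atom :: "'a measure \<Rightarrow> 'a set \<Rightarrow> bool" where
  "is_atom M A \<longleftrightarrow> A \<in> sets M \<and> measure M A > 0 \<and>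
     (\<forall>B\<in>sets M. B \<subseteq> A \<longrightarrow> measure M B = 0 \<or> measure M B = measure M A)"

definition purely_atomic :: "'a measure \<Rightarrow> bool" where
  "purely_atomic M \<longleftrightarrow>
     (\<forall>A\<in>sets M. measure M A > 0 \<longrightarrow> (\<exists>B. B \<subseteq> A \<and> is_atom M B))"

definition finitely_many_atoms :: "'a measure \<Rightarrow> bool" where
  "finitely_many_atoms M \<longleftrightarrow>
     (\<exists>F. finite F \<and> (\<forall>B\<in>F. is_atom M B) \<and>
        (\<forall>A. is_atom M A \<longrightarrow> (\<exists>B\<in>F. measure M (A - B) = 0 \<and> measure M (B - A) = 0)))"

definition equivalent_prob :: "'a measure \<Rightarrow> 'a measure \<Rightarrow> bool" where
  "equivalent_prob Q M \<longleftrightarrow> prob_space Q \<and> sets Q = sets M \<and>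
     (\<forall>A\<in>sets M. emeasure Q A = 0 \<longleftrightarrow> emeasure M A = 0)"

definition topologies_coincide_L0_L1 :: "'a measure \<Rightarrow> 'a measure \<Rightarrow> bool" where
  "topologies_coincide_L0_L1 M Q \<longleftrightarrow>
     (\<forall>U. open_rel (dist_L0 M) (L0_plus M) U \<longleftrightarrow> open_rel (dist_L1 Q) (L0_plus M) U)"

end

theory Submission
  imports Defs
begin

text \<open>If \<open>A\<close> carries no atom, it contains finitely many sets \<open>B\<^sub>1, \<dots>, B\<^sub>n\<close> of arbitrarily
  small measure covering half of \<open>A\<close>; the variables \<open>n \<cdot> 1\<^sub>B\<^sub>i\<close> then lie in any \<open>L\<^sup>0\<close>-ball
  around \<open>0\<close>, but their average \<open>\<Sum>\<^sub>i 1\<^sub>B\<^sub>i\<close> is at least \<open>1\<close> on half of \<open>A\<close>, so no convex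
  neighbourhood of \<open>0\<close> fits into a small ball. If \<open>P\<close> is purely atomic, finitely many atoms carry
  all but \<open>\<epsilon>\<close> of the mass, and the variables that are uniformly \<open>\<delta>\<close>-close to \<open>X\<close> on each of these
  atoms form a convex neighbourhood of \<open>X\<close> inside the \<open>\<epsilon>\<close>-ball, because a variable close to \<open>X\<close> in
  probability cannot deviate by \<open>\<delta>\<close> on a whole atom.

  Finitely many atoms means that the non-null sets have measure bounded away from \<open>0\<close>, for \<open>P\<close> and
  for every equivalent \<open>Q\<close>. Under such a gap, closeness in probability as well as in \<open>L\<^sup>1(Q)\<close>
  forces uniform closeness almost surely, so the two topologies agree. Without the gap there are
  sets \<open>B\<close> of arbitrarily small \<open>P\<close>-measure, and \<open>1\<^sub>B / Q(B)\<close> is \<open>L\<^sup>0\<close>-close to \<open>0\<close> but has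
  \<open>L\<^sup>1(Q)\<close>-norm \<open>1\<close>.\<close>

definition measure_gap :: "'a measure \<Rightarrow> real \<Rightarrow> bool" where
  "measure_gap M \<delta> \<longleftrightarrow> 0 < \<delta> \<and> (\<forall>B\<in>sets M. 0 < measure M B \<longrightarrow> \<delta> \<le> measure M B)"

subsection \<open>Topologies given by distances\<close>

lemma open_rel_ball:
  assumes triangle: "\<And>X Y Z. X \<in> S \<Longrightarrow> Y \<in> S \<Longrightarrow> Z \<in> S \<Longrightarrow> d X Z \<le> d X Y + d Y Z"
    and X: "X \<in> S"
  shows "open_rel d S {Y\<in>S. d X Y < ennreal e}"
  unfolding open_rel_def
proof (intro conjI ballI)
  fix Y assume Y: "Y \<in> {Y\<in>S. d X Y < ennreal e}"
  then have "d X Y \<noteq> top" by (auto simp: top_unique)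
  then obtain a where a: "d X Y = ennreal a" "0 \<le> a" by (cases "d X Y") auto
  with Y have "a < e" by (simp add: ennreal_less_iff)
  have "{Z \<in> S. d Y Z < ennreal (e - a)} \<subseteq> {Y\<in>S. d X Y < ennreal e}"
  proof safe
    fix Z assume Z: "Z \<in> S" "d Y Z < ennreal (e - a)"
    have "d X Z \<le> ennreal a + d Y Z" using triangle[of X Y Z] X Y Z a(1) by auto
    also have "\<dots> < ennreal a + ennreal (e - a)" using Z(2) by (simp add: ennreal_add_left_cancel_less)
    also have "\<dots> = ennreal e" using a(2) \<open>a < e\<close> by (subst ennreal_plus[symmetric]) auto
    finally show "d X Z < ennreal e" .
  qed
  then show "\<exists>r>0. {Z \<in> S. d Y Z < ennreal r} \<subseteq> {Y\<in>S. d X Y < ennreal e}"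
    using \<open>a < e\<close> by (intro exI[of _ "e - a"]) auto
qed auto

lemma nbhd_rel_if_ball_subset:
  assumes triangle: "\<And>X Y Z. X \<in> S \<Longrightarrow> Y \<in> S \<Longrightarrow> Z \<in> S \<Longrightarrow> d X Z \<le> d X Y + d Y Z"
    and "X \<in> S" "d X X = 0" "0 < e" "{Y\<in>S. d X Y < ennreal e} \<subseteq> N" "N \<subseteq> S"
  shows "nbhd_rel d S X N"
  unfolding nbhd_rel_def
  using assms(2-) open_rel_ball[OF triangle assms(2), where e=e]
  by (intro conjI exI[of _ "{Y\<in>S. d X Y < ennreal e}"]) auto

lemma nbhd_rel_contains_ball:
  assumes "nbhd_rel d S X N"
  obtains e where "0 < e" "{Y\<in>S. d X Y < ennreal e} \<subseteq> N"
proof -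
  obtain V where V: "open_rel d S V" "X \<in> V" "V \<subseteq> N"
    using assms unfolding nbhd_rel_def by blast
  then obtain e where "0 < e" "{Y\<in>S. d X Y < ennreal e} \<subseteq> V"
    unfolding open_rel_def by blast
  with V(3) show ?thesis using that by blast
qed

lemma open_rel_transfer:
  assumes "\<And>e. 0 < e \<Longrightarrow> \<exists>e'>0. \<forall>X\<in>S. \<forall>Y\<in>S. d' X Y < ennreal e' \<longrightarrow> d X Y < ennreal e"
    and "open_rel d S U"
  shows "open_rel d' S U"
  unfolding open_rel_def
proof (intro conjI ballI)
  show "U \<subseteq> S" using assms(2) unfolding open_rel_def by auto
  fix X assume "X \<in> U"
  then obtain e where "0 < e" "{Y \<in> S. d X Y < ennreal e} \<subseteq> U"
    using assms(2) unfolding open_rel_def by blast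
  with assms(1)[of e] \<open>U \<subseteq> S\<close> \<open>X \<in> U\<close> show "\<exists>e>0. {Y \<in> S. d' X Y < ennreal e} \<subseteq> U"
    by blast
qed

subsection \<open>The \<open>L\<^sup>0\<close> and \<open>L\<^sup>1\<close> distances\<close>

lemma dist_L0_triangle:
  assumes "X \<in> borel_measurable M" "Y \<in> borel_measurable M" "Z \<in> borel_measurable M"
  shows "dist_L0 M X Z \<le> dist_L0 M X Y + dist_L0 M Y Z"
proof -
  have "dist_L0 M X Z \<le>
      (\<integral>\<^sup>+ \<omega>. ennreal (min 1 \<bar>X \<omega> - Y \<omega>\<bar>) + ennreal (min 1 \<bar>Y \<omega> - Z \<omega>\<bar>) \<partial>M)"
    unfolding dist_L0_def
    by (intro nn_integral_mono) (auto simp flip: ennreal_plus intro!: ennreal_leI)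
  also have "\<dots> = dist_L0 M X Y + dist_L0 M Y Z"
    unfolding dist_L0_def using assms by (intro nn_integral_add) auto
  finally show ?thesis .
qed

lemma dist_L1_triangle:
  assumes "X \<in> borel_measurable M" "Y \<in> borel_measurable M" "Z \<in> borel_measurable M"
  shows "dist_L1 M X Z \<le> dist_L1 M X Y + dist_L1 M Y Z"
proof -
  have "dist_L1 M X Z \<le> (\<integral>\<^sup>+ \<omega>. ennreal \<bar>X \<omega> - Y \<omega>\<bar> + ennreal \<bar>Y \<omega> - Z \<omega>\<bar> \<partial>M)"
    unfolding dist_L1_def
    by (intro nn_integral_mono) (auto simp flip: ennreal_plus intro!: ennreal_leI)
  also have "\<dots> = dist_L1 M X Y + dist_L1 M Y Z"
    unfolding dist_L1_def using assms by (intro nn_integral_add) auto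
  finally show ?thesis .
qed

lemma dist_L0_self [simp]: "dist_L0 M X X = 0"
  by (simp add: dist_L0_def)

lemma dist_L1_self [simp]: "dist_L1 M X X = 0"
  by (simp add: dist_L1_def)

lemma L0_plus_measurable: "X \<in> L0_plus M \<Longrightarrow> X \<in> borel_measurable M"
  by (simp add: L0_plus_def)

lemma zero_in_L0_plus: "(\<lambda>_. 0) \<in> L0_plus M"
  by (simp add: L0_plus_def)

lemma L0_plus_dist_triangle:
  "\<lbrakk>X \<in> L0_plus M; Y \<in> L0_plus M; Z \<in> L0_plus M\<rbrakk> \<Longrightarrow> dist_L0 M X Z \<le> dist_L0 M X Y + dist_L0 M Y Z"
  by (intro dist_L0_triangle L0_plus_measurable)

lemma dist_L0_zero_indicator_le:
  assumes "B \<in> sets M"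
  shows "dist_L0 M (\<lambda>_. 0) (\<lambda>\<omega>. c * indicator B \<omega>) \<le> emeasure M B"
proof -
  have "dist_L0 M (\<lambda>_. 0) (\<lambda>\<omega>. c * indicator B \<omega>) \<le> (\<integral>\<^sup>+\<omega>. indicator B \<omega> \<partial>M)"
    unfolding dist_L0_def by (intro nn_integral_mono) (auto split: split_indicator)
  then show ?thesis using assms by simp
qed

lemma dist_L0_zero_sum_indicator_ge:
  assumes "finite F" "F \<subseteq> sets M"
  shows "emeasure M (\<Union>F) \<le> dist_L0 M (\<lambda>_. 0) (\<lambda>\<omega>. \<Sum>B\<in>F. indicator B \<omega>)"
proof -
  have "indicator (\<Union>F) \<omega> \<le> ennreal (min 1 \<bar>0 - (\<Sum>B\<in>F. indicator B \<omega> :: real)\<bar>)" for \<omega>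
  proof (cases "\<omega> \<in> \<Union>F")
    case True
    then obtain B where "B \<in> F" "\<omega> \<in> B" by auto
    then have "1 \<le> (\<Sum>B\<in>F. indicator B \<omega> :: real)"
      using member_le_sum[of B F "\<lambda>B. indicator B \<omega> :: real"] assms(1) by auto
    with True show ?thesis by simp
  qed simp
  then have "(\<integral>\<^sup>+\<omega>. indicator (\<Union>F) \<omega> \<partial>M) \<le> dist_L0 M (\<lambda>_. 0) (\<lambda>\<omega>. \<Sum>B\<in>F. indicator B \<omega>)"
    unfolding dist_L0_def by (intro nn_integral_mono)
  moreover have "\<Union>F \<in> sets M" using assms by (intro sets.finite_Union) auto
  ultimately show ?thesis by simp
qed

lemma (in prob_space) dist_L0_le_if_AE_close_on:
  assumes U: "U \<in> sets M" and "0 \<le> \<delta>" and close: "AE \<omega> in M. \<omega> \<in> U \<longrightarrow> \<bar>X \<omega> - Y \<omega>\<bar> \<le> \<delta>"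
  shows "dist_L0 M X Y \<le> ennreal (\<delta> + (1 - measure M U))"
proof -
  have "dist_L0 M X Y \<le> (\<integral>\<^sup>+\<omega>. ennreal \<delta> + indicator (space M - U) \<omega> \<partial>M)"
    unfolding dist_L0_def
  proof (rule nn_integral_mono_AE)
    show "AE \<omega> in M. ennreal (min 1 \<bar>X \<omega> - Y \<omega>\<bar>) \<le> ennreal \<delta> + indicator (space M - U) \<omega>"
      using close AE_space
    proof eventually_elim
      case (elim \<omega>)
      show ?case
      proof (cases "\<omega> \<in> U")
        case True
        then show ?thesis using elim by (simp add: ennreal_leI add_increasing2)
      next
        case False
        have "ennreal (min 1 \<bar>X \<omega> - Y \<omega>\<bar>) \<le> 1" by (simp add: ennreal_leI)
        then show ?thesis using False elim by (simp add: add_increasing)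
      qed
    qed
  qed
  also have "\<dots> = ennreal \<delta> + emeasure M (space M - U)"
    using U by (simp add: nn_integral_add emeasure_space_1)
  also have "\<dots> = ennreal (\<delta> + (1 - measure M U))"
    using U \<open>0 \<le> \<delta>\<close> by (simp add: emeasure_eq_measure prob_compl ennreal_plus)
  finally show ?thesis .
qed

lemma convex_fun_set_average:
  assumes "convex_fun_set C" "finite F" "F \<noteq> {}" "\<And>i. i \<in> F \<Longrightarrow> g i \<in> C"
  shows "(\<lambda>\<omega>. (\<Sum>i\<in>F. g i \<omega>) / real (card F)) \<in> C"
  using assms(2-4)
proof (induction F rule: finite_ne_induct)
  case (singleton x)
  then show ?case by simp
next
  case (insert x F)
  define k where "k = real (card F)"
  have k: "0 < k" using insert unfolding k_def by (simp add: card_gt_0_iff)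
  have combine: "(\<lambda>\<omega>. t * Y \<omega> + (1 - t) * Z \<omega>) \<in> C"
    if "Y \<in> C" "Z \<in> C" "0 \<le> t" "t \<le> 1" for Y Z t
    using assms(1) that unfolding convex_fun_set_def by blast
  have "(\<lambda>\<omega>. 1 / (k + 1) * g x \<omega> + (1 - 1 / (k + 1)) * ((\<Sum>i\<in>F. g i \<omega>) / k)) \<in> C"
    using insert k unfolding k_def by (intro combine) auto
  moreover have "1 / (k + 1) * g x \<omega> + (1 - 1 / (k + 1)) * ((\<Sum>i\<in>F. g i \<omega>) / k)
      = (\<Sum>i\<in>insert x F. g i \<omega>) / real (card (insert x F))" for \<omega>
  proof -
    have "1 - 1 / (k + 1) = k / (k + 1)" using k by (simp add: field_simps)
    moreover have "(\<Sum>i\<in>insert x F. g i \<omega>) = g x \<omega> + (\<Sum>i\<in>F. g i \<omega>)"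
      "real (card (insert x F)) = k + 1"
      using insert.hyps unfolding k_def by simp_all
    ultimately show ?thesis using k by (simp add: add_divide_distrib)
  qed
  ultimately show ?case by simp
qed

lemma convex_fun_set_AE_close:
  "convex_fun_set {Y \<in> L0_plus M. \<forall>B\<in>F. AE \<omega> in M. \<omega> \<in> B \<longrightarrow> \<bar>Y \<omega> - X \<omega>\<bar> < \<delta>}"
  unfolding convex_fun_set_def
proof (intro ballI allI impI)
  fix Y Z and t :: real
  assume Y: "Y \<in> {Y \<in> L0_plus M. \<forall>B\<in>F. AE \<omega> in M. \<omega> \<in> B \<longrightarrow> \<bar>Y \<omega> - X \<omega>\<bar> < \<delta>}"
    and Z: "Z \<in> {Y \<in> L0_plus M. \<forall>B\<in>F. AE \<omega> in M. \<omega> \<in> B \<longrightarrow> \<bar>Y \<omega> - X \<omega>\<bar> < \<delta>}"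
    and t: "0 \<le> t \<and> t \<le> 1"
  have convex_abs_less: "\<bar>t * y + (1 - t) * z - x\<bar> < \<delta>"
    if "\<bar>y - x\<bar> < \<delta>" "\<bar>z - x\<bar> < \<delta>" for x y z :: real
  proof -
    have "t * y + (1 - t) * z - x = t * (y - x) + (1 - t) * (z - x)"
      by (simp add: algebra_simps)
    also have "\<bar>\<dots>\<bar> \<le> t * \<bar>y - x\<bar> + (1 - t) * \<bar>z - x\<bar>"
      using t abs_triangle_ineq[of "t * (y - x)" "(1 - t) * (z - x)"] by (simp add: abs_mult)
    also have "\<dots> < \<delta>"
      using t that by (intro convex_bound_lt) auto
    finally show ?thesis .
  qed
  have "(\<lambda>\<omega>. t * Y \<omega> + (1 - t) * Z \<omega>) \<in> L0_plus M"
  proof -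
    have "AE \<omega> in M. 0 \<le> Y \<omega>" "AE \<omega> in M. 0 \<le> Z \<omega>" using Y Z by (auto simp: L0_plus_def)
    then have "AE \<omega> in M. 0 \<le> t * Y \<omega> + (1 - t) * Z \<omega>"
      by eventually_elim (use t in auto)
    then show ?thesis using Y Z by (auto simp: L0_plus_def)
  qed
  moreover have "AE \<omega> in M. \<omega> \<in> B \<longrightarrow> \<bar>t * Y \<omega> + (1 - t) * Z \<omega> - X \<omega>\<bar> < \<delta>" if "B \<in> F" for B
  proof -
    have "AE \<omega> in M. \<omega> \<in> B \<longrightarrow> \<bar>Y \<omega> - X \<omega>\<bar> < \<delta>" "AE \<omega> in M. \<omega> \<in> B \<longrightarrow> \<bar>Z \<omega> - X \<omega>\<bar> < \<delta>"
      using Y Z that by auto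
    then show ?thesis by eventually_elim (use convex_abs_less in blast)
  qed
  ultimately show "(\<lambda>\<omega>. t * Y \<omega> + (1 - t) * Z \<omega>) \<in>
      {Y \<in> L0_plus M. \<forall>B\<in>F. AE \<omega> in M. \<omega> \<in> B \<longrightarrow> \<bar>Y \<omega> - X \<omega>\<bar> < \<delta>}"
    by (intro CollectI conjI ballI)
qed

subsection \<open>Atoms and measure gaps\<close>

lemma ae_filter_eq_if_equivalent_prob:
  assumes "equivalent_prob Q M"
  shows "ae_filter Q = ae_filter M"
proof -
  have sets: "sets Q = sets M" using assms by (simp add: equivalent_prob_def)
  then have "null_sets Q = null_sets M"
    using assms by (auto simp: equivalent_prob_def null_sets_def)
  then show ?thesis
    by (simp add: filter_eq_iff eventually_ae_filter sets_eq_imp_space_eq[OF sets])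
qed

lemma measure_pos_iff_if_equivalent_prob:
  assumes "equivalent_prob Q M" "prob_space M" "B \<in> sets M"
  shows "0 < measure Q B \<longleftrightarrow> 0 < measure M B"
proof -
  interpret Q: prob_space Q using assms(1) by (simp add: equivalent_prob_def)
  interpret prob_space M by (fact assms(2))
  have "measure Q B = 0 \<longleftrightarrow> measure M B = 0"
    using assms(1,3) by (simp add: equivalent_prob_def Q.emeasure_eq_measure emeasure_eq_measure)
  then show ?thesis by (simp add: zero_less_measure_iff)
qed

lemma (in prob_space) nn_integral_le_if_AE_le:
  assumes "AE \<omega> in M. f \<omega> \<le> c"
  shows "(\<integral>\<^sup>+\<omega>. ennreal (f \<omega>) \<partial>M) \<le> ennreal c"
proof -
  have "(\<integral>\<^sup>+\<omega>. ennreal (f \<omega>) \<partial>M) \<le> (\<integral>\<^sup>+\<omega>. ennreal c \<partial>M)"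
    using assms by (intro nn_integral_mono_AE) (auto elim!: eventually_mono intro: ennreal_leI)
  then show ?thesis by (simp add: emeasure_space_1)
qed

lemma nn_integral_ge_level_set:
  assumes "f \<in> borel_measurable M"
  shows "ennreal \<eta> * emeasure M {\<omega>\<in>space M. \<eta> \<le> f \<omega>} \<le> (\<integral>\<^sup>+\<omega>. ennreal (f \<omega>) \<partial>M)"
proof -
  have "{\<omega>\<in>space M. \<eta> \<le> f \<omega>} \<in> sets M" using assms by measurable
  then have "ennreal \<eta> * emeasure M {\<omega>\<in>space M. \<eta> \<le> f \<omega>}
      = (\<integral>\<^sup>+\<omega>. ennreal \<eta> * indicator {\<omega>\<in>space M. \<eta> \<le> f \<omega>} \<omega> \<partial>M)"
    by (simp add: nn_integral_cmult_indicator)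
  also have "\<dots> \<le> (\<integral>\<^sup>+\<omega>. ennreal (f \<omega>) \<partial>M)"
    by (intro nn_integral_mono) (auto split: split_indicator intro!: ennreal_leI)
  finally show ?thesis .
qed

lemma (in finite_measure) measure_level_set_less:
  assumes "f \<in> borel_measurable M" "0 < \<eta>" "(\<integral>\<^sup>+\<omega>. ennreal (f \<omega>) \<partial>M) < ennreal (\<eta> * c)"
  shows "measure M {\<omega>\<in>space M. \<eta> \<le> f \<omega>} < c"
proof -
  have "ennreal (\<eta> * measure M {\<omega>\<in>space M. \<eta> \<le> f \<omega>})
      = ennreal \<eta> * emeasure M {\<omega>\<in>space M. \<eta> \<le> f \<omega>}"
    using assms(2) by (simp add: emeasure_eq_measure ennreal_mult)
  also have "\<dots> < ennreal (\<eta> * c)"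
    using nn_integral_ge_level_set[OF assms(1)] assms(3) by (rule le_less_trans)
  finally show ?thesis using assms(2) by (simp add: ennreal_less_iff)
qed

lemma (in finite_measure) AE_less_on_atom:
  assumes atom: "is_atom M B" and f: "f \<in> borel_measurable M" "0 < \<eta>"
    and "(\<integral>\<^sup>+\<omega>. ennreal (f \<omega>) \<partial>M) < ennreal (\<eta> * measure M B)"
  shows "AE \<omega> in M. \<omega> \<in> B \<longrightarrow> f \<omega> < \<eta>"
proof -
  define E where "E = {\<omega>\<in>space M. \<eta> \<le> f \<omega>}"
  have BE: "B \<inter> E \<in> sets M" unfolding E_def using atom f by (auto simp: is_atom_def)
  have "measure M (B \<inter> E) \<le> measure M E" unfolding E_def using f by (intro finite_measure_mono) auto
  also have "\<dots> < measure M B" unfolding E_def using f assms(4) by (rule measure_level_set_less)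
  finally have "measure M (B \<inter> E) = 0" using atom BE unfolding is_atom_def by force
  then have "B \<inter> E \<in> null_sets M" using BE by (simp add: emeasure_eq_measure null_sets_def)
  then show ?thesis by (rule AE_I') (auto simp: E_def not_le)
qed

lemma (in finite_measure) AE_close_on_atom_if_dist_L0_less:
  assumes "is_atom M B" "X \<in> borel_measurable M" "Y \<in> borel_measurable M" "0 < \<delta>" "\<delta> \<le> 1"
    and "dist_L0 M X Y < ennreal (\<delta> * measure M B)"
  shows "AE \<omega> in M. \<omega> \<in> B \<longrightarrow> \<bar>X \<omega> - Y \<omega>\<bar> < \<delta>"
proof -
  have "(\<lambda>\<omega>. min 1 \<bar>X \<omega> - Y \<omega>\<bar>) \<in> borel_measurable M" using assms(2,3) by measurable
  then have "AE \<omega> in M. \<omega> \<in> B \<longrightarrow> min 1 \<bar>X \<omega> - Y \<omega>\<bar> < \<delta>"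
    using assms(1,4,6) unfolding dist_L0_def by (intro AE_less_on_atom)
  then show ?thesis using assms(5) by (auto simp: min_less_iff_disj elim!: eventually_mono)
qed

lemma (in finite_measure) AE_less_if_measure_gap:
  assumes gap: "measure_gap M \<delta>" and f: "f \<in> borel_measurable M" "0 < \<eta>"
    and "(\<integral>\<^sup>+\<omega>. ennreal (f \<omega>) \<partial>M) < ennreal (\<eta> * \<delta>)"
  shows "AE \<omega> in M. f \<omega> < \<eta>"
proof -
  define E where "E = {\<omega>\<in>space M. \<eta> \<le> f \<omega>}"
  have E: "E \<in> sets M" unfolding E_def using f by measurable
  have "measure M E < \<delta>" unfolding E_def using f assms(4) by (rule measure_level_set_less)
  then have "measure M E = 0" using gap E unfolding measure_gap_def by (auto simp: zero_less_measure_iff)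
  then have "E \<in> null_sets M" using E by (simp add: emeasure_eq_measure null_sets_def)
  then show ?thesis by (rule AE_I') (auto simp: E_def not_le)
qed

lemma (in finite_measure) atoms_AE_disjoint_or_AE_eq:
  assumes A: "is_atom M A" and B: "is_atom M B"
  shows "(measure M (A - B) = 0 \<and> measure M (B - A) = 0) \<or> measure M (A \<inter> B) = 0"
proof (rule disjCI)
  assume "measure M (A \<inter> B) \<noteq> 0"
  moreover have "A \<in> sets M" "B \<in> sets M" using A B by (auto simp: is_atom_def)
  ultimately have "measure M (A \<inter> B) = measure M A" "measure M (A \<inter> B) = measure M B"
    using A B unfolding is_atom_def by (metis Int_lower1 sets.Int, metis Int_lower2 sets.Int)
  with \<open>A \<in> sets M\<close> \<open>B \<in> sets M\<close> show "measure M (A - B) = 0 \<and> measure M (B - A) = 0"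
    by (simp add: finite_measure_Diff' Int_commute)
qed

lemma (in finite_measure) exhaustion_incseq:
  assumes A: "A \<in> sets M" and G: "G \<subseteq> sets M" "\<And>B. B \<in> G \<Longrightarrow> B \<subseteq> A"
    and dense: "\<And>B. B \<in> sets M \<Longrightarrow> B \<subseteq> A \<Longrightarrow> 0 < measure M B \<Longrightarrow> \<exists>C\<in>G. C \<subseteq> B \<and> 0 < measure M C"
  obtains F where "\<And>n. finite (F n)" "\<And>n. F n \<subseteq> G" "incseq F"
    "measure M (A - (\<Union>n. \<Union>(F n))) = 0"
proof -
  define \<F> where "\<F> = {F. finite F \<and> F \<subseteq> G}"
  have Union_sets: "\<Union>F \<in> sets M" if "F \<in> \<F>" for F
    using that G by (auto simp: \<F>_def intro!: sets.finite_Union)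
  have "bdd_above ((\<lambda>F. measure M (\<Union>F)) ` \<F>)"
    using Union_sets by (intro bdd_aboveI[of _ "measure M (space M)"]) (auto intro!: bounded_measure)
  moreover define s where "s = (SUP F\<in>\<F>. measure M (\<Union>F))"
  ultimately have le_s: "measure M (\<Union>F) \<le> s" if "F \<in> \<F>" for F
    using that by (auto intro: cSUP_upper)
  have "\<exists>F\<in>\<F>. s - 1 / Suc n < measure M (\<Union>F)" for n
    unfolding s_def using \<open>bdd_above _\<close> by (subst less_cSUP_iff[symmetric]) (auto simp: \<F>_def)
  then obtain F where F: "\<And>n. F n \<in> \<F>" "\<And>n. s - 1 / Suc n < measure M (\<Union>(F n))"
    by metis
  define F' where "F' n = (\<Union>m\<le>n. F m)" for n
  have F': "F' n \<in> \<F>" for n using F(1) by (auto simp: F'_def \<F>_def)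
  have "incseq F'" by (force simp: incseq_def F'_def)
  have approx: "s - 1 / Suc n < measure M (\<Union>(F' n))" for n
    using F(2)[of n] Union_sets[OF F'] finite_measure_mono[of "\<Union>(F n)" "\<Union>(F' n)"]
    by (fastforce simp: F'_def)
  define U where "U = (\<Union>n. \<Union>(F' n))"
  have "measure M (A - U) = 0"
  proof (rule ccontr)
    assume "measure M (A - U) \<noteq> 0"
    moreover have "U \<in> sets M" using Union_sets[OF F'] by (auto simp: U_def)
    ultimately obtain C where C: "C \<in> G" "C \<subseteq> A - U" "0 < measure M C"
      using dense[of "A - U"] A by (auto simp: zero_less_measure_iff)
    then obtain n where n: "1 / Suc n < measure M C"
      by (metis reals_Archimedean inverse_eq_divide)
    have "insert C (F' n) \<in> \<F>" using C(1) F'[of n] by (simp add: \<F>_def)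
    then have "measure M (C \<union> \<Union>(F' n)) \<le> s" using le_s by fastforce
    moreover have "measure M (C \<union> \<Union>(F' n)) = measure M C + measure M (\<Union>(F' n))"
      using C G Union_sets[OF F'] by (intro finite_measure_Union) (auto simp: U_def)
    ultimately show False using approx[of n] n by linarith
  qed
  with F' \<open>incseq F'\<close> show ?thesis by (intro that[of F']) (auto simp: \<F>_def U_def)
qed

lemma (in finite_measure) exhaustion:
  assumes A: "A \<in> sets M" and G: "G \<subseteq> sets M" "\<And>B. B \<in> G \<Longrightarrow> B \<subseteq> A"
    and dense: "\<And>B. B \<in> sets M \<Longrightarrow> B \<subseteq> A \<Longrightarrow> 0 < measure M B \<Longrightarrow> \<exists>C\<in>G. C \<subseteq> B \<and> 0 < measure M C"
    and "0 < e"
  shows "\<exists>F. finite F \<and> F \<subseteq> G \<and> measure M A - e < measure M (\<Union>F)"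
proof -
  obtain F where F: "\<And>n. finite (F n)" "\<And>n. F n \<subseteq> G" "incseq F"
    and null: "measure M (A - (\<Union>n. \<Union>(F n))) = 0"
    using exhaustion_incseq[OF A G dense] by blast
  have sets: "\<Union>(F n) \<in> sets M" for n using F G by (intro sets.finite_Union) auto
  have "incseq (\<lambda>n. \<Union>(F n))" using F(3) unfolding incseq_def by (meson Sup_subset_mono)
  then have "(\<lambda>n. measure M (\<Union>(F n))) \<longlonglongrightarrow> measure M (\<Union>n. \<Union>(F n))"
    using sets by (intro finite_Lim_measure_incseq) auto
  moreover have "measure M (\<Union>n. \<Union>(F n)) = measure M A"
    using null A sets F(2) G(2) by (subst (asm) finite_measure_Diff) (auto, blast)
  ultimately have "\<forall>\<^sub>F n in sequentially. measure M A - e < measure M (\<Union>(F n))"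
    using \<open>0 < e\<close> by (intro order_tendstoD) auto
  then obtain n where "measure M A - e < measure M (\<Union>(F n))"
    by (auto simp: eventually_sequentially)
  with F show ?thesis by blast
qed

lemma (in finite_measure) non_atom_halve:
  assumes C: "C \<in> sets M" "0 < measure M C" "\<not> is_atom M C"
  shows "\<exists>D\<in>sets M. D \<subseteq> C \<and> 0 < measure M D \<and> measure M D \<le> measure M C / 2"
proof -
  obtain D where D: "D \<in> sets M" "D \<subseteq> C" "measure M D \<noteq> 0" "measure M D \<noteq> measure M C"
    using C unfolding is_atom_def by blast
  have "measure M D \<le> measure M C" using C D by (intro finite_measure_mono) auto
  moreover have "measure M (C - D) = measure M C - measure M D"
    using C D by (intro finite_measure_Diff) auto
  ultimately show ?thesis
    using C D by (cases "measure M D \<le> measure M C / 2")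
      (force simp: zero_less_measure_iff intro!: bexI[of _ D],
       force simp: zero_less_measure_iff intro!: bexI[of _ "C - D"])
qed

lemma (in finite_measure) atomless_small_subset:
  assumes atomless: "\<And>C. C \<subseteq> B \<Longrightarrow> \<not> is_atom M C"
    and B: "B \<in> sets M" "0 < measure M B" and "0 < r"
  shows "\<exists>C\<in>sets M. C \<subseteq> B \<and> 0 < measure M C \<and> measure M C < r"
proof -
  have "\<exists>C\<in>sets M. C \<subseteq> B \<and> 0 < measure M C \<and> measure M C \<le> measure M B / 2 ^ k" for k
  proof (induction k)
    case 0
    then show ?case using B by auto
  next
    case (Suc k)
    then obtain C where C: "C \<in> sets M" "C \<subseteq> B" "0 < measure M C" "measure M C \<le> measure M B / 2 ^ k"
      by blast
    then obtain D where "D \<in> sets M" "D \<subseteq> C" "0 < measure M D" "measure M D \<le> measure M C / 2"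
      using non_atom_halve atomless by blast
    with C show ?case by (intro bexI[of _ D]) auto
  qed
  moreover obtain k where "measure M B / r < 2 ^ k" using real_arch_pow[of 2] by auto
  then have "measure M B / 2 ^ k < r" using \<open>0 < r\<close> by (simp add: field_simps)
  ultimately show ?thesis by (meson le_less_trans)
qed

lemma (in finite_measure) atomless_small_cover:
  assumes A: "A \<in> sets M" "0 < measure M A" and atomless: "\<And>B. B \<subseteq> A \<Longrightarrow> \<not> is_atom M B"
    and r: "0 < r"
  obtains F where "finite F" "F \<subseteq> sets M" "\<And>B. B \<in> F \<Longrightarrow> measure M B < r"
    "measure M A / 2 < measure M (\<Union>F)"
proof -
  have "\<exists>F. finite F \<and> F \<subseteq> {B \<in> sets M. B \<subseteq> A \<and> measure M B < r}
      \<and> measure M A - measure M A / 2 < measure M (\<Union>F)"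
  proof (rule exhaustion[OF A(1)])
    show "\<exists>C\<in>{B \<in> sets M. B \<subseteq> A \<and> measure M B < r}. C \<subseteq> B \<and> 0 < measure M C"
      if B: "B \<in> sets M" "B \<subseteq> A" "0 < measure M B" for B
    proof -
      have "\<not> is_atom M C" if "C \<subseteq> B" for C using atomless that B(2) by blast
      then obtain C where "C \<in> sets M" "C \<subseteq> B" "0 < measure M C" "measure M C < r"
        using atomless_small_subset[OF _ B(1,3) r] by blast
      with B(2) show ?thesis by blast
    qed
  qed (use A(2) in auto)
  then obtain F where "finite F" "F \<subseteq> {B \<in> sets M. B \<subseteq> A \<and> measure M B < r}"
    "measure M A - measure M A / 2 < measure M (\<Union>F)"
    by blast
  then have "finite F" "F \<subseteq> sets M" "\<And>B. B \<in> F \<Longrightarrow> measure M B < r"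
    "measure M A / 2 < measure M (\<Union>F)"
    by auto
  then show ?thesis by (rule that)
qed

lemma (in prob_space) purely_atomic_finite_atoms_approx:
  assumes atomic: "purely_atomic M" and "0 < e"
  obtains F where "finite F" "\<And>B. B \<in> F \<Longrightarrow> is_atom M B" "1 - e < measure M (\<Union>F)"
proof -
  have "\<exists>F. finite F \<and> F \<subseteq> {B. is_atom M B} \<and> measure M (space M) - e < measure M (\<Union>F)"
  proof (rule exhaustion)
    show "{B. is_atom M B} \<subseteq> sets M" by (auto simp: is_atom_def)
    show "B \<subseteq> space M" if "B \<in> {B. is_atom M B}" for B
      using that sets.sets_into_space by (auto simp: is_atom_def)
    show "\<exists>C\<in>{B. is_atom M B}. C \<subseteq> B \<and> 0 < measure M C"
      if B: "B \<in> sets M" "B \<subseteq> space M" "0 < measure M B" for B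
    proof -
      obtain C where "C \<subseteq> B" "is_atom M C" using atomic B by (auto simp: purely_atomic_def)
      then show ?thesis by (auto simp: is_atom_def)
    qed
  qed (use \<open>0 < e\<close> in auto)
  then obtain F where "finite F" "F \<subseteq> {B. is_atom M B}" "1 - e < measure M (\<Union>F)"
    by (auto simp: prob_space)
  then show ?thesis by (intro that[of F]) auto
qed

lemma (in prob_space) card_AE_disjoint_atoms_le:
  assumes gap: "measure_gap M \<delta>" and F: "finite F" "\<And>B. B \<in> F \<Longrightarrow> is_atom M B"
    and disjoint: "pairwise (\<lambda>B B'. measure M (B \<inter> B') = 0) F"
  shows "real (card F) * \<delta> \<le> 1"
proof -
  have sets: "B \<in> sets M" if "B \<in> F" for B using F(2)[OF that] by (simp add: is_atom_def)
  have "pairwise (\<lambda>B B'. AE \<omega> in M. \<omega> \<notin> B \<or> \<omega> \<notin> B') F"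
    unfolding pairwise_def
  proof (intro ballI impI)
    fix B B' assume "B \<in> F" "B' \<in> F" "B \<noteq> B'"
    then have "B \<inter> B' \<in> null_sets M"
      using disjoint sets by (auto simp: pairwise_def emeasure_eq_measure null_sets_def)
    then show "AE \<omega> in M. \<omega> \<notin> B \<or> \<omega> \<notin> B'" by (auto dest: AE_not_in)
  qed
  then have "measure M (\<Union>F) = (\<Sum>B\<in>F. measure M B)"
    using F(1) sets by (intro measure_Union_AE) (auto simp: fmeasurable_eq_sets)
  moreover have "(\<Sum>B\<in>F. \<delta>) \<le> (\<Sum>B\<in>F. measure M B)"
    using gap F(2) sets by (intro sum_mono) (auto simp: measure_gap_def is_atom_def)
  ultimately show ?thesis using prob_le_1[of "\<Union>F"] by simp
qed

lemma (in prob_space) finitely_many_atoms_if_measure_gap: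
  assumes gap: "measure_gap M \<delta>"
  shows "finitely_many_atoms M"
proof -
  define P where "P F \<longleftrightarrow> finite F \<and> (\<forall>B\<in>F. is_atom M B) \<and> pairwise (\<lambda>B B'. measure M (B \<inter> B') = 0) F"
    for F
  obtain n :: nat where n: "1 / \<delta> < n" using reals_Archimedean2 by blast
  have "card F < n" if "P F" for F
  proof -
    have "real (card F) * \<delta> \<le> 1" using that gap by (intro card_AE_disjoint_atoms_le) (auto simp: P_def)
    moreover have "1 < real n * \<delta>" using gap n by (simp add: measure_gap_def field_simps)
    ultimately have "real (card F) * \<delta> < real n * \<delta>" by linarith
    with gap show ?thesis by (simp add: measure_gap_def)
  qed
  moreover have "P {}" by (simp add: P_def)
  ultimately obtain F where F: "P F" and maximal: "\<And>F'. P F' \<Longrightarrow> card F' \<le> card F"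
    using ex_has_greatest_nat[of P "{}" card n] by blast
  have "\<exists>B\<in>F. measure M (A - B) = 0 \<and> measure M (B - A) = 0" if A: "is_atom M A" for A
  proof (rule ccontr)
    assume new: "\<not> ?thesis"
    then have "measure M (A \<inter> B) = 0" if "B \<in> F" for B
      using that atoms_AE_disjoint_or_AE_eq[OF A] F by (auto simp: P_def)
    then have "P (insert A F)" and "A \<notin> F"
      using F A new by (auto simp: P_def pairwise_insert Int_commute)
    then show False using maximal[of "insert A F"] F by (simp add: P_def)
  qed
  with F show ?thesis unfolding finitely_many_atoms_def P_def by blast
qed

lemma (in prob_space) measure_gap_if_finitely_many_atoms:
  assumes atomic: "purely_atomic M" and "finitely_many_atoms M" and Q: "equivalent_prob Q M"
  shows "\<exists>\<delta>. measure_gap Q \<delta>"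
proof -
  interpret Q: prob_space Q using Q by (simp add: equivalent_prob_def)
  have sets: "sets Q = sets M" using Q by (simp add: equivalent_prob_def)
  obtain F where F: "finite F" "\<And>B. B \<in> F \<Longrightarrow> is_atom M B"
    and cover: "\<And>A. is_atom M A \<Longrightarrow> \<exists>B\<in>F. measure M (A - B) = 0 \<and> measure M (B - A) = 0"
    using assms(2) unfolding finitely_many_atoms_def by blast
  have F_sets: "B \<in> sets M" if "B \<in> F" for B using F(2)[OF that] by (simp add: is_atom_def)
  define \<delta> where "\<delta> = Min (insert 1 (measure Q ` F))"
  have "0 < measure Q B" if "B \<in> F" for B
    using measure_pos_iff_if_equivalent_prob[OF Q prob_space_axioms F_sets[OF that]] F(2)[OF that]
    by (simp add: is_atom_def)
  then have \<delta>: "0 < \<delta>" "\<And>B. B \<in> F \<Longrightarrow> \<delta> \<le> measure Q B"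
    unfolding \<delta>_def using F(1) by (auto simp: Min_gr_iff)
  have "\<delta> \<le> measure Q C" if C: "C \<in> sets Q" "0 < measure Q C" for C
  proof -
    have "0 < measure M C"
      using C measure_pos_iff_if_equivalent_prob[OF Q prob_space_axioms] sets by simp
    then obtain A where A: "A \<subseteq> C" "is_atom M A" using atomic C sets by (auto simp: purely_atomic_def)
    then obtain B where B: "B \<in> F" "measure M (B - A) = 0" using cover by blast
    have A_sets: "A \<in> sets M" using A(2) by (simp add: is_atom_def)
    have "measure Q (B - A) = 0"
      using measure_pos_iff_if_equivalent_prob[OF Q prob_space_axioms, of "B - A"] B F_sets A_sets
      by (simp add: zero_less_measure_iff)
    then have "measure Q B \<le> measure Q A"
      using F_sets[OF B(1)] A_sets sets Q.finite_measure_Diff'[of B A]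
        Q.finite_measure_mono[of "B \<inter> A" A] by auto
    also have "\<dots> \<le> measure Q C" using A C sets by (intro Q.finite_measure_mono) auto
    finally show ?thesis using \<delta>(2)[OF B(1)] by linarith
  qed
  with \<delta>(1) show ?thesis unfolding measure_gap_def by blast
qed

subsection \<open>Local convexity\<close>

lemma (in prob_space) not_L0_plus_locally_convex_if_atomless:
  assumes A: "A \<in> sets M" "0 < measure M A" and atomless: "\<And>B. B \<subseteq> A \<Longrightarrow> \<not> is_atom M B"
  shows "\<not> L0_plus_locally_convex M"
proof
  assume "L0_plus_locally_convex M"
  define N where "N = {Y \<in> L0_plus M. dist_L0 M (\<lambda>_. 0) Y < ennreal (measure M A / 2)}"
  have "nbhd_rel (dist_L0 M) (L0_plus M) (\<lambda>_. 0) N"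
    unfolding N_def using A(2)
    by (intro nbhd_rel_if_ball_subset[OF L0_plus_dist_triangle, where e = "measure M A / 2"]
        zero_in_L0_plus) auto
  then obtain C where C: "convex_fun_set C" "nbhd_rel (dist_L0 M) (L0_plus M) (\<lambda>_. 0) C" "C \<subseteq> N"
    using \<open>L0_plus_locally_convex M\<close> zero_in_L0_plus unfolding L0_plus_locally_convex_def by blast
  obtain r where r: "0 < r" "{Y \<in> L0_plus M. dist_L0 M (\<lambda>_. 0) Y < ennreal r} \<subseteq> C"
    using nbhd_rel_contains_ball[OF C(2)] .
  obtain F where F: "finite F" "F \<subseteq> sets M" "\<And>B. B \<in> F \<Longrightarrow> measure M B < r"
    and large: "measure M A / 2 < measure M (\<Union>F)"
    using atomless_small_cover[OF A atomless r(1)] by blast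
  have "F \<noteq> {}" using large A(2) by auto
  define n where "n = real (card F)"
  have "0 < n" using F(1) \<open>F \<noteq> {}\<close> by (simp add: n_def card_gt_0_iff)
  have "(\<lambda>\<omega>. n * indicator B \<omega>) \<in> C" if B: "B \<in> F" for B
  proof -
    have "dist_L0 M (\<lambda>_. 0) (\<lambda>\<omega>. n * indicator B \<omega>) \<le> emeasure M B"
      using F(2) B by (intro dist_L0_zero_indicator_le) auto
    also have "\<dots> < ennreal r" using F(2,3) B by (simp add: subset_eq emeasure_eq_measure ennreal_lessI r(1))
    finally have "dist_L0 M (\<lambda>_. 0) (\<lambda>\<omega>. n * indicator B \<omega>) < ennreal r" .
    moreover have "(\<lambda>\<omega>. n * indicator B \<omega>) \<in> L0_plus M"
      unfolding L0_plus_def using F(2) B \<open>0 < n\<close> by auto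
    ultimately show ?thesis using r(2) by blast
  qed
  then have "(\<lambda>\<omega>. (\<Sum>B\<in>F. n * indicator B \<omega>) / n) \<in> C"
    using convex_fun_set_average[OF C(1) F(1) \<open>F \<noteq> {}\<close>] by (simp add: n_def)
  moreover have "(\<lambda>\<omega>. (\<Sum>B\<in>F. n * indicator B \<omega>) / n) = (\<lambda>\<omega>. \<Sum>B\<in>F. indicator B \<omega>)"
    using \<open>0 < n\<close> by (simp add: sum_distrib_left[symmetric])
  ultimately have near: "dist_L0 M (\<lambda>_. 0) (\<lambda>\<omega>. \<Sum>B\<in>F. indicator B \<omega>) < ennreal (measure M A / 2)"
    using C(3) by (auto simp: N_def)
  have "ennreal (measure M (\<Union>F)) \<le> dist_L0 M (\<lambda>_. 0) (\<lambda>\<omega>. \<Sum>B\<in>F. indicator B \<omega>)"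
    using dist_L0_zero_sum_indicator_ge[OF F(1,2)] by (simp add: emeasure_eq_measure)
  then have "ennreal (measure M (\<Union>F)) < ennreal (measure M A / 2)"
    using near by (rule le_less_trans)
  with large show False by (simp add: ennreal_less_iff)
qed

lemma (in prob_space) L0_plus_locally_convex_if_purely_atomic:
  assumes atomic: "purely_atomic M"
  shows "L0_plus_locally_convex M"
  unfolding L0_plus_locally_convex_def
proof (intro ballI allI impI)
  fix X N assume X: "X \<in> L0_plus M" and N: "nbhd_rel (dist_L0 M) (L0_plus M) X N"
  obtain e where e: "0 < e" "{Y \<in> L0_plus M. dist_L0 M X Y < ennreal e} \<subseteq> N"
    using nbhd_rel_contains_ball[OF N] .
  obtain F where F: "finite F" "\<And>B. B \<in> F \<Longrightarrow> is_atom M B" "1 - e / 2 < measure M (\<Union>F)"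
    using purely_atomic_finite_atoms_approx[OF atomic, of "e / 2"] e(1) by auto
  define \<delta> where "\<delta> = min 1 (e / 2)"
  have \<delta>: "0 < \<delta>" "\<delta> \<le> 1" "\<delta> \<le> e / 2" using e(1) by (auto simp: \<delta>_def)
  define p where "p = Min (insert 1 (measure M ` F))"
  have p: "0 < p" "\<And>B. B \<in> F \<Longrightarrow> p \<le> measure M B"
    using F(1,2) by (auto simp: p_def Min_gr_iff is_atom_def)
  define C where "C = {Y \<in> L0_plus M. \<forall>B\<in>F. AE \<omega> in M. \<omega> \<in> B \<longrightarrow> \<bar>Y \<omega> - X \<omega>\<bar> < \<delta>}"
  have "{Y \<in> L0_plus M. dist_L0 M X Y < ennreal (\<delta> * p)} \<subseteq> C"
  proof safe
    fix Y assume Y: "Y \<in> L0_plus M" "dist_L0 M X Y < ennreal (\<delta> * p)"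
    have "AE \<omega> in M. \<omega> \<in> B \<longrightarrow> \<bar>X \<omega> - Y \<omega>\<bar> < \<delta>" if B: "B \<in> F" for B
    proof (rule AE_close_on_atom_if_dist_L0_less)
      have "\<delta> * p \<le> \<delta> * measure M B" using p(2)[OF B] \<delta>(1) by simp
      then show "dist_L0 M X Y < ennreal (\<delta> * measure M B)"
        using Y(2) by (elim order.strict_trans2) (rule ennreal_leI)
    qed (use F(2) B X Y(1) \<delta> in \<open>auto intro: L0_plus_measurable\<close>)
    with Y(1) show "Y \<in> C" by (auto simp: C_def abs_minus_commute)
  qed
  then have "nbhd_rel (dist_L0 M) (L0_plus M) X C"
    using X p(1) \<delta>(1) by (intro nbhd_rel_if_ball_subset[OF L0_plus_dist_triangle]) (auto simp: C_def)
  moreover have "C \<subseteq> N"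
  proof
    fix Y assume Y: "Y \<in> C"
    have "AE \<omega> in M. \<forall>B\<in>F. \<omega> \<in> B \<longrightarrow> \<bar>Y \<omega> - X \<omega>\<bar> < \<delta>"
      using Y F(1) by (intro AE_finite_allI) (auto simp: C_def)
    then have "AE \<omega> in M. \<omega> \<in> \<Union>F \<longrightarrow> \<bar>X \<omega> - Y \<omega>\<bar> \<le> \<delta>"
      by eventually_elim (auto simp: abs_minus_commute)
    then have "dist_L0 M X Y \<le> ennreal (\<delta> + (1 - measure M (\<Union>F)))"
      using F(1,2) \<delta>(1) by (intro dist_L0_le_if_AE_close_on sets.finite_Union) (auto simp: is_atom_def)
    also have "\<dots> < ennreal e" using F(3) \<delta>(3) e(1) by (intro ennreal_lessI) auto
    finally show "Y \<in> N" using Y e(2) by (auto simp: C_def)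
  qed
  ultimately show "\<exists>C. convex_fun_set C \<and> nbhd_rel (dist_L0 M) (L0_plus M) X C \<and> C \<subseteq> N"
    using convex_fun_set_AE_close unfolding C_def by blast
qed

subsection \<open>Comparison with the \<open>L\<^sup>1(Q)\<close>-topology\<close>

lemma (in prob_space) dist_L1_less_if_dist_L0_less:
  assumes Q: "equivalent_prob Q M" and gap: "measure_gap M \<delta>"
    and "X \<in> borel_measurable M" "Y \<in> borel_measurable M" "0 < e"
    and "dist_L0 M X Y < ennreal (min 1 (e / 2) * \<delta>)"
  shows "dist_L1 Q X Y < ennreal e"
proof -
  interpret Q: prob_space Q using Q by (simp add: equivalent_prob_def)
  have "(\<lambda>\<omega>. min 1 \<bar>X \<omega> - Y \<omega>\<bar>) \<in> borel_measurable M" using assms(3,4) by measurable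
  then have "AE \<omega> in M. min 1 \<bar>X \<omega> - Y \<omega>\<bar> < min 1 (e / 2)"
    using assms(5,6) unfolding dist_L0_def by (intro AE_less_if_measure_gap[OF gap]) auto
  then have "AE \<omega> in Q. \<bar>X \<omega> - Y \<omega>\<bar> \<le> e / 2"
    unfolding ae_filter_eq_if_equivalent_prob[OF Q] by eventually_elim auto
  then have "dist_L1 Q X Y \<le> ennreal (e / 2)"
    unfolding dist_L1_def by (rule Q.nn_integral_le_if_AE_le)
  also have "\<dots> < ennreal e" using \<open>0 < e\<close> by (intro ennreal_lessI) auto
  finally show ?thesis .
qed

lemma (in prob_space) dist_L0_less_if_dist_L1_less:
  assumes Q: "equivalent_prob Q M" and gap: "measure_gap Q \<delta>"
    and "X \<in> borel_measurable M" "Y \<in> borel_measurable M" "0 < e"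
    and "dist_L1 Q X Y < ennreal (e / 2 * \<delta>)"
  shows "dist_L0 M X Y < ennreal e"
proof -
  interpret Q: prob_space Q using Q by (simp add: equivalent_prob_def)
  have sets: "sets Q = sets M" using Q by (simp add: equivalent_prob_def)
  have "(\<lambda>\<omega>. \<bar>X \<omega> - Y \<omega>\<bar>) \<in> borel_measurable Q"
    unfolding measurable_cong_sets[OF sets refl] using assms(3,4) by measurable
  then have "AE \<omega> in Q. \<bar>X \<omega> - Y \<omega>\<bar> < e / 2"
    using assms(5,6) unfolding dist_L1_def by (intro Q.AE_less_if_measure_gap[OF gap]) auto
  then have "AE \<omega> in M. min 1 \<bar>X \<omega> - Y \<omega>\<bar> \<le> e / 2"
    unfolding ae_filter_eq_if_equivalent_prob[OF Q] by eventually_elim (auto simp: min_def)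
  then have "dist_L0 M X Y \<le> ennreal (e / 2)"
    unfolding dist_L0_def by (rule nn_integral_le_if_AE_le)
  also have "\<dots> < ennreal e" using \<open>0 < e\<close> by (intro ennreal_lessI) auto
  finally show ?thesis .
qed

lemma (in prob_space) topologies_coincide_L0_L1_if_measure_gap:
  assumes Q: "equivalent_prob Q M" and gap_M: "measure_gap M \<delta>" and gap_Q: "measure_gap Q \<delta>'"
  shows "topologies_coincide_L0_L1 M Q"
  unfolding topologies_coincide_L0_L1_def
proof (intro allI iffI)
  fix U
  assume "open_rel (dist_L0 M) (L0_plus M) U"
  then show "open_rel (dist_L1 Q) (L0_plus M) U"
  proof (rule open_rel_transfer[rotated])
    fix e :: real assume "0 < e"
    with gap_Q show "\<exists>e'>0. \<forall>X\<in>L0_plus M. \<forall>Y\<in>L0_plus M.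
        dist_L1 Q X Y < ennreal e' \<longrightarrow> dist_L0 M X Y < ennreal e"
      by (intro exI[of _ "e / 2 * \<delta>'"] conjI ballI impI
          dist_L0_less_if_dist_L1_less[OF Q gap_Q] L0_plus_measurable) (auto simp: measure_gap_def)
  qed
next
  fix U
  assume "open_rel (dist_L1 Q) (L0_plus M) U"
  then show "open_rel (dist_L0 M) (L0_plus M) U"
  proof (rule open_rel_transfer[rotated])
    fix e :: real assume "0 < e"
    with gap_M show "\<exists>e'>0. \<forall>X\<in>L0_plus M. \<forall>Y\<in>L0_plus M.
        dist_L0 M X Y < ennreal e' \<longrightarrow> dist_L1 Q X Y < ennreal e"
      by (intro exI[of _ "min 1 (e / 2) * \<delta>"] conjI ballI impI
          dist_L1_less_if_dist_L0_less[OF Q gap_M] L0_plus_measurable) (auto simp: measure_gap_def)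
  qed
qed

lemma (in prob_space) not_topologies_coincide_L0_L1_if_infinitely_many_atoms:
  assumes "\<not> finitely_many_atoms M" and Q: "equivalent_prob Q M"
  shows "\<not> topologies_coincide_L0_L1 M Q"
proof
  assume coincide: "topologies_coincide_L0_L1 M Q"
  interpret Q: prob_space Q using Q by (simp add: equivalent_prob_def)
  have sets: "sets Q = sets M" using Q by (simp add: equivalent_prob_def)
  define U where "U = {Y \<in> L0_plus M. dist_L1 Q (\<lambda>_. 0) Y < ennreal 1}"
  have "open_rel (dist_L1 Q) (L0_plus M) U"
    unfolding U_def using measurable_cong_sets[OF sets refl]
    by (intro open_rel_ball dist_L1_triangle zero_in_L0_plus) (auto simp: L0_plus_def)
  then have "open_rel (dist_L0 M) (L0_plus M) U"
    using coincide by (simp add: topologies_coincide_L0_L1_def)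
  moreover have "(\<lambda>_. 0) \<in> U" by (simp add: U_def zero_in_L0_plus)
  ultimately obtain e where e: "0 < e" "{Y \<in> L0_plus M. dist_L0 M (\<lambda>_. 0) Y < ennreal e} \<subseteq> U"
    unfolding open_rel_def by blast
  have "\<not> measure_gap M e" using assms(1) finitely_many_atoms_if_measure_gap by blast
  then obtain B where B: "B \<in> sets M" "0 < measure M B" "measure M B < e"
    using e(1) by (auto simp: measure_gap_def not_le)
  then have QB: "0 < measure Q B" using measure_pos_iff_if_equivalent_prob[OF Q prob_space_axioms] by simp
  define Y where "Y = (\<lambda>\<omega>. 1 / measure Q B * indicator B \<omega> :: real)"
  have "dist_L0 M (\<lambda>_. 0) Y \<le> ennreal (measure M B)"
    unfolding Y_def using dist_L0_zero_indicator_le[OF B(1), of "1 / measure Q B"]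
    by (simp add: emeasure_eq_measure)
  also have "\<dots> < ennreal e" using B by (intro ennreal_lessI) auto
  finally have "dist_L0 M (\<lambda>_. 0) Y < ennreal e" .
  moreover have "Y \<in> L0_plus M" using B(1) QB by (auto simp: Y_def L0_plus_def)
  ultimately have "Y \<in> U" using e(2) by blast
  then have "dist_L1 Q (\<lambda>_. 0) Y < ennreal 1" by (simp add: U_def)
  moreover have "dist_L1 Q (\<lambda>_. 0) Y = ennreal (1 / measure Q B) * emeasure Q B"
    using B(1) sets unfolding dist_L1_def Y_def
    by (subst nn_integral_cmult_indicator[symmetric]) (auto intro!: nn_integral_cong split: split_indicator)
  ultimately show False using QB by (simp add: Q.emeasure_eq_measure flip: ennreal_mult)
qed

theorem proposition3p3:
  fixes M :: "'a measure"
  assumes "prob_space M"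
  shows "(L0_plus_locally_convex M \<longleftrightarrow> purely_atomic M)
    \<and> (purely_atomic M \<longrightarrow>
         ((\<exists>Q. equivalent_prob Q M \<and> topologies_coincide_L0_L1 M Q) \<longleftrightarrow> finitely_many_atoms M))
    \<and> (purely_atomic M \<and> finitely_many_atoms M \<longrightarrow>
         (\<forall>Q. equivalent_prob Q M \<longrightarrow> topologies_coincide_L0_L1 M Q))"
proof -
  interpret prob_space M by (fact assms)
  have equivalent_self: "equivalent_prob M M" using assms by (simp add: equivalent_prob_def)
  have "L0_plus_locally_convex M \<longleftrightarrow> purely_atomic M"
  proof
    show "purely_atomic M" if "L0_plus_locally_convex M"
      unfolding purely_atomic_def
      using not_L0_plus_locally_convex_if_atomless that by blast
  qed (rule L0_plus_locally_convex_if_purely_atomic)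
  moreover have "topologies_coincide_L0_L1 M Q"
    if atomic: "purely_atomic M" and finite: "finitely_many_atoms M" and Q: "equivalent_prob Q M"
    for Q
  proof -
    obtain \<delta> where "measure_gap M \<delta>"
      using measure_gap_if_finitely_many_atoms[OF atomic finite equivalent_self] by blast
    moreover obtain \<delta>' where "measure_gap Q \<delta>'"
      using measure_gap_if_finitely_many_atoms[OF atomic finite Q] by blast
    ultimately show ?thesis by (rule topologies_coincide_L0_L1_if_measure_gap[OF Q])
  qed
  moreover have "\<not> topologies_coincide_L0_L1 M Q"
    if "\<not> finitely_many_atoms M" "equivalent_prob Q M" for Q
    by (rule not_topologies_coincide_L0_L1_if_infinitely_many_atoms[OF that])
  ultimately show ?thesis using equivalent_self by blast
qed

end
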